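(* Let $X \subset \mathbb{R}^n$ be finite with at least $k+1$ points. Every element $(s,[x])$ of $\Gamma_{k}(X)$ has a unique largest branch point below it, i.e. there is a branch point $(s_{0},[x_{0}]) \leq (s,[x])$ such that every branch point $(t,[y]) \leq (s,[x])$ satisfies $(t,[y]) \leq (s_{0},[x_{0}])$.
   Context: $\mathbb{R}^n$ has Euclidean metric $d$. For $s\ge 0$, $V_s(X)$ is the Vietoris–Rips complex (vertex set $X$, simplices nonempty subsets with pairwise distances $\le s$), and for an integer $k\ge 0$, $L_{s,k}(X)$ is the full subcomplex of $V_s(X)$ on the vertices $x$ having at least $k$ points $x'\ne x$ of $X$ with $d(x,x')\le s$. $\Gamma_{k}(X)$ is the poset whose elements are pairs $(s,[x])$ with $s \in \mathbb{R}_{\geq 0}$ and $[x] \in \pi_{0}L_{s,k}(X)$, with $(s,[x]) \leq (t,[y])$ iff $s \leq t$ and the function $\pi_{0}L_{s,k}(X) \to \pi_{0}L_{t,k}(X)$ induced by inclusion sends $[x]$ to $[y]$. An element $(t,[x])$ of $\Gamma_{k}(X)$ is a branch point if either (1) there is $s_{0} < t$ such that for all $s$ with $s_{0} \leq s < t$ there are two distinct elements $(s,[x_{0}]) \neq (s,[x_{1}])$ with $(s,[x_{0}]) \leq (t,[x])$ and $(s,[x_{1}]) \leq (t,[x])$; or (2) there is no element $(s,[y])$ with $s<t$ and $(s,[y]) \leq (t,[x])$. *)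

theory Defs
  imports "HOL-Analysis.Analysis"
begin

definition Lverts :: "('a::metric_space) set \<Rightarrow> nat \<Rightarrow> real \<Rightarrow> 'a set" where
  "Lverts X k s = {x \<in> X. k \<le> card {x' \<in> X. x' \<noteq> x \<and> dist x x' \<le> s}}"

text \<open>Edges (1-simplices) of the full subcomplex L_{s,k}(X) of the Vietoris--Rips complex V_s(X).\<close>
definition Ledge :: "('a::metric_space) set \<Rightarrow> nat \<Rightarrow> real \<Rightarrow> 'a \<Rightarrow> 'a \<Rightarrow> bool" where
  "Ledge X k s x y \<longleftrightarrow> x \<in> Lverts X k s \<and> y \<in> Lverts X k s \<and> dist x y \<le> s"

text \<open>The path component [x] of a vertex x in L_{s,k}(X) (components of a simplicial
  complex are those of its 1-skeleton).\<close>
definition comp :: "('a::metric_space) set \<Rightarrow> nat \<Rightarrow> real \<Rightarrow> 'a \<Rightarrow> 'a set" where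
  "comp X k s x = {y. (Ledge X k s)\<^sup>*\<^sup>* x y}"

definition pi0 :: "('a::metric_space) set \<Rightarrow> nat \<Rightarrow> real \<Rightarrow> 'a set set" where
  "pi0 X k s = comp X k s ` Lverts X k s"

definition Gamma :: "('a::metric_space) set \<Rightarrow> nat \<Rightarrow> (real \<times> 'a set) set" where
  "Gamma X k = {(s, C). 0 \<le> s \<and> C \<in> pi0 X k s}"

text \<open>(s,C) \<le> (t,D): s \<le> t and the map pi0 L_s \<rightarrow> pi0 L_t induced by inclusion sends C to D.\<close>
definition gamma_le :: "('a::metric_space) set \<Rightarrow> nat \<Rightarrow> real \<times> 'a set \<Rightarrow> real \<times> 'a set \<Rightarrow> bool" where
  "gamma_le X k p q \<longleftrightarrow> p \<in> Gamma X k \<and> q \<in> Gamma X k \<and> fst p \<le> fst q \<and>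
     (\<forall>x \<in> snd p. comp X k (fst q) x = snd q)"

definition branch_point :: "('a::metric_space) set \<Rightarrow> nat \<Rightarrow> real \<times> 'a set \<Rightarrow> bool" where
  "branch_point X k p \<longleftrightarrow> p \<in> Gamma X k \<and>
     ((\<exists>s0 < fst p. \<forall>s. s0 \<le> s \<and> s < fst p \<longrightarrow>
         (\<exists>C0 C1. C0 \<noteq> C1 \<and> gamma_le X k (s, C0) p \<and> gamma_le X k (s, C1) p))
      \<or> \<not> (\<exists>s C. s < fst p \<and> gamma_le X k (s, C) p))"

end

theory Submission
  imports Defs
begin

text \<open>Only the finitely many pairwise distances of points of \<open>X\<close> are critical levels: between
  two consecutive ones nothing changes. Fix \<open>q = (s, C)\<close> and call a level \<open>t\<close> unbranched
  (\<open>unique_below\<close>) if exactly one element of level \<open>t\<close> lies below \<open>q\<close>. Let \<open>s\<^sub>0\<close> be the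
  least critical level such that all levels in \<open>[s\<^sub>0, s]\<close> are unbranched, and \<open>p\<^sub>0\<close> the unique
  element of level \<open>s\<^sub>0\<close> below \<open>q\<close>. Below \<open>s\<^sub>0\<close> the elements under \<open>p\<^sub>0\<close> and under \<open>q\<close>
  coincide, and on the interval \<open>[a, s\<^sub>0)\<close> up to the previous critical level \<open>a\<close> they do not
  change; by minimality level \<open>a\<close> is branched, i.e. it carries either two elements below \<open>p\<^sub>0\<close>
  or none, which are the two clauses of being a branch point. A branch point \<open>(t, D) \<le> q\<close> with
  \<open>t > s\<^sub>0\<close> lies above \<open>p\<^sub>0\<close>, so it has elements below it, and then it needs two distinct
  ones at some unbranched level in \<open>[s\<^sub>0, t)\<close>, which is impossible.\<close>

lemma Lverts_subset: "Lverts X k s \<subseteq> X"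
  unfolding Lverts_def by auto

lemma Lverts_mono:
  assumes "finite X" "s \<le> t"
  shows "Lverts X k s \<subseteq> Lverts X k t"
proof
  fix x assume x: "x \<in> Lverts X k s"
  have "card {x' \<in> X. x' \<noteq> x \<and> dist x x' \<le> s} \<le> card {x' \<in> X. x' \<noteq> x \<and> dist x x' \<le> t}"
    by (rule card_mono) (use assms in auto)
  with x show "x \<in> Lverts X k t"
    unfolding Lverts_def by auto
qed

lemma Ledge_mono: "finite X \<Longrightarrow> s \<le> t \<Longrightarrow> Ledge X k s x y \<Longrightarrow> Ledge X k t x y"
  unfolding Ledge_def using Lverts_mono by fastforce

lemma symp_Ledge: "symp (Ledge X k s)"
  unfolding Ledge_def by (auto intro: sympI simp: dist_commute)

lemma comp_mono: "finite X \<Longrightarrow> s \<le> t \<Longrightarrow> comp X k s x \<subseteq> comp X k t x"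
  unfolding comp_def by (auto intro: mono_rtranclp[rule_format] Ledge_mono)

lemma comp_self: "x \<in> comp X k s x"
  unfolding comp_def by simp

lemma comp_eq_if_mem:
  assumes "y \<in> comp X k s x"
  shows "comp X k s y = comp X k s x"
proof -
  have "(Ledge X k s)\<^sup>*\<^sup>* y x"
    using assms sympD[OF symp_rtranclp[OF symp_Ledge]] unfolding comp_def by blast
  with assms show ?thesis
    unfolding comp_def by (auto intro: rtranclp_trans)
qed

lemma Gamma_E:
  assumes "(t, D) \<in> Gamma X k"
  obtains v where "v \<in> Lverts X k t" "D = comp X k t v"
  using assms unfolding Gamma_def pi0_def by auto

lemma Gamma_nonempty: "(t, D) \<in> Gamma X k \<Longrightarrow> D \<noteq> {}"
  using comp_self by (fastforce elim: Gamma_E)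

lemma gamma_le_refl: "p \<in> Gamma X k \<Longrightarrow> gamma_le X k p p"
  unfolding gamma_le_def by (cases p) (auto elim!: Gamma_E simp: comp_eq_if_mem)

lemma gamma_le_trans: "gamma_le X k p q \<Longrightarrow> gamma_le X k q r \<Longrightarrow> gamma_le X k p r"
  unfolding gamma_le_def by (metis comp_self order_trans)

lemma gamma_le_unique_above:
  "gamma_le X k (t, D) (t', D1) \<Longrightarrow> gamma_le X k (t, D) (t', D2) \<Longrightarrow> D1 = D2"
  unfolding gamma_le_def using Gamma_nonempty by fastforce

lemma gamma_le_exists_above:
  assumes "finite X" "(t, D) \<in> Gamma X k" "t \<le> t'"
  obtains D' where "gamma_le X k (t, D) (t', D')"
proof -
  obtain v where v: "v \<in> Lverts X k t" "D = comp X k t v"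
    using assms(2) by (rule Gamma_E)
  have "(t', comp X k t' v) \<in> Gamma X k"
    using v Lverts_mono[OF assms(1,3)] assms(2,3) unfolding Gamma_def pi0_def by auto
  moreover have "\<forall>x \<in> D. comp X k t' x = comp X k t' v"
    using v comp_mono[OF assms(1,3)] comp_eq_if_mem by blast
  ultimately show thesis
    using assms(2,3) that unfolding gamma_le_def by auto
qed

lemma gamma_le_factor:
  assumes "finite X" "gamma_le X k (t, D) (t', D')" "gamma_le X k (t, D) q" "t' \<le> fst q"
  shows "gamma_le X k (t', D') q"
proof -
  obtain v where v: "v \<in> D"
    using assms(2) Gamma_nonempty unfolding gamma_le_def by fastforce
  then have "comp X k t' v = D'" "comp X k (fst q) v = snd q"
    using assms(2,3) unfolding gamma_le_def by auto
  then have "\<forall>y \<in> D'. comp X k (fst q) y = snd q"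
    using comp_mono[OF assms(1,4)] comp_eq_if_mem by blast
  moreover have "(t', D') \<in> Gamma X k" "q \<in> Gamma X k"
    using assms(2,3) unfolding gamma_le_def by simp_all
  ultimately show ?thesis
    using assms(4) unfolding gamma_le_def by simp
qed

lemma gamma_le_cong_level:
  assumes "pi0 X k t = pi0 X k t'" "0 \<le> t" "0 \<le> t'" "t \<le> fst q" "t' \<le> fst q"
  shows "gamma_le X k (t, D) q \<longleftrightarrow> gamma_le X k (t', D) q"
  using assms unfolding gamma_le_def Gamma_def by auto

definition pair_dists :: "'a::metric_space set \<Rightarrow> real set" where
  "pair_dists X = (\<lambda>(x, y). dist x y) ` (X \<times> X)"

lemma finite_pair_dists: "finite X \<Longrightarrow> finite (pair_dists X)"
  unfolding pair_dists_def by simp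

lemma pi0_eq_if_no_pair_dist_between:
  assumes "a \<le> b" "\<forall>d \<in> pair_dists X. \<not> (a < d \<and> d \<le> b)"
  shows "pi0 X k a = pi0 X k b"
proof -
  have dist_iff: "dist x y \<le> a \<longleftrightarrow> dist x y \<le> b" if "x \<in> X" "y \<in> X" for x y
    using assms that unfolding pair_dists_def by force
  have "{x' \<in> X. x' \<noteq> x \<and> dist x x' \<le> a} = {x' \<in> X. x' \<noteq> x \<and> dist x x' \<le> b}"
    if "x \<in> X" for x
    using dist_iff that by auto
  then have Lverts_eq: "Lverts X k a = Lverts X k b"
    unfolding Lverts_def by auto
  then have "Ledge X k a = Ledge X k b"
    using Lverts_subset dist_iff unfolding Ledge_def by (intro ext) blast
  with Lverts_eq show ?thesis
    unfolding pi0_def comp_def by simp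
qed

lemma previous_critical_level:
  assumes "finite X" "0 < b"
  obtains a where "a \<in> insert 0 (pair_dists X)" "0 \<le> a" "a < b"
    "\<And>t. a \<le> t \<Longrightarrow> t < b \<Longrightarrow> pi0 X k t = pi0 X k a"
proof -
  define A where "A = insert 0 {d \<in> pair_dists X. d < b}"
  have "finite A"
    unfolding A_def using finite_pair_dists[OF assms(1)] by simp
  moreover have "A \<noteq> {}"
    unfolding A_def by simp
  ultimately have "Max A \<in> A" and le_Max: "\<And>d. d \<in> A \<Longrightarrow> d \<le> Max A"
    by simp_all
  then have "Max A \<in> insert 0 (pair_dists X)" "0 \<le> Max A" "Max A < b"
    using assms(2) unfolding A_def by auto
  moreover have "pi0 X k t = pi0 X k (Max A)" if "Max A \<le> t" "t < b" for t
  proof (rule pi0_eq_if_no_pair_dist_between[symmetric])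
    show "Max A \<le> t"
      using that(1) .
    show "\<forall>d \<in> pair_dists X. \<not> (Max A < d \<and> d \<le> t)"
    proof (intro ballI notI)
      fix d assume "d \<in> pair_dists X" "Max A < d \<and> d \<le> t"
      with that(2) have "d \<in> A"
        unfolding A_def by simp
      with \<open>Max A < d \<and> d \<le> t\<close> show False
        using le_Max by fastforce
    qed
  qed
  ultimately show thesis
    using that by blast
qed

definition unique_below :: "'a::metric_space set \<Rightarrow> nat \<Rightarrow> real \<times> 'a set \<Rightarrow> real \<Rightarrow> bool" where
  "unique_below X k q t \<longleftrightarrow> (\<exists>!D. gamma_le X k (t, D) q)"

lemma unique_below_self: "q \<in> Gamma X k \<Longrightarrow> unique_below X k q (fst q)"
  unfolding unique_below_def
  by (metis gamma_le_def gamma_le_refl gamma_le_unique_above prod.collapse)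

lemma unique_belowD:
  "unique_below X k q t \<Longrightarrow> gamma_le X k (t, D1) q \<Longrightarrow> gamma_le X k (t, D2) q \<Longrightarrow> D1 = D2"
  unfolding unique_below_def by blast

lemma unique_below_cong_level:
  assumes "pi0 X k t = pi0 X k t'" "0 \<le> t" "0 \<le> t'" "t \<le> fst q" "t' \<le> fst q"
  shows "unique_below X k q t \<longleftrightarrow> unique_below X k q t'"
  unfolding unique_below_def using gamma_le_cong_level[OF assms] by simp

lemma gamma_le_iff_below_unique_level:
  assumes "finite X" "gamma_le X k (s0, D0) q" "unique_below X k q s0" "t \<le> s0"
  shows "gamma_le X k (t, D) (s0, D0) \<longleftrightarrow> gamma_le X k (t, D) q"
proof
  assume "gamma_le X k (t, D) (s0, D0)"
  then show "gamma_le X k (t, D) q"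
    using assms(2) gamma_le_trans by blast
next
  assume le_q: "gamma_le X k (t, D) q"
  then obtain D' where D': "gamma_le X k (t, D) (s0, D')"
    using gamma_le_exists_above[OF assms(1) _ assms(4)] unfolding gamma_le_def by blast
  have "s0 \<le> fst q"
    using assms(2) unfolding gamma_le_def by simp
  then have "gamma_le X k (s0, D') q"
    by (rule gamma_le_factor[OF assms(1) D' le_q])
  then have "D' = D0"
    using unique_belowD[OF assms(3)] assms(2) by blast
  with D' show "gamma_le X k (t, D) (s0, D0)"
    by simp
qed

lemma unique_below_iff_below_unique_level:
  assumes "finite X" "gamma_le X k (s0, D0) q" "unique_below X k q s0" "t \<le> s0"
  shows "unique_below X k (s0, D0) t \<longleftrightarrow> unique_below X k q t"
  unfolding unique_below_def using gamma_le_iff_below_unique_level[OF assms] by simp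

lemma branch_point_level_zero: "(0, D) \<in> Gamma X k \<Longrightarrow> branch_point X k (0, D)"
  unfolding branch_point_def gamma_le_def Gamma_def by auto

lemma branch_point_if_not_unique_below:
  assumes "finite X" "p \<in> Gamma X k" "0 \<le> a" "a < fst p"
    and const: "\<And>t. a \<le> t \<Longrightarrow> t < fst p \<Longrightarrow> pi0 X k t = pi0 X k a"
    and branched: "\<not> unique_below X k p a"
  shows "branch_point X k p"
proof -
  have shift: "gamma_le X k (t, D) p \<longleftrightarrow> gamma_le X k (a, D) p"
    if "a \<le> t" "t < fst p" for t D
    using gamma_le_cong_level[OF const[OF that]] assms(3) that by simp
  show ?thesis
  proof (cases "\<exists>D. gamma_le X k (a, D) p")
    case True
    with branched obtain D1 D2 where "D1 \<noteq> D2" "gamma_le X k (a, D1) p" "gamma_le X k (a, D2) p"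
      unfolding unique_below_def by blast
    with shift have "\<exists>C0 C1. C0 \<noteq> C1 \<and> gamma_le X k (t, C0) p \<and> gamma_le X k (t, C1) p"
      if "a \<le> t" "t < fst p" for t
      using that by blast
    with assms(2,4) show ?thesis
      unfolding branch_point_def by auto
  next
    case False
    have "\<not> gamma_le X k (t, D) p" if "t < fst p" for t D
    proof
      assume le_p: "gamma_le X k (t, D) p"
      show False
      proof (cases "a \<le> t")
        case True
        with False le_p shift that show False by blast
      next
        case False
        moreover have "(t, D) \<in> Gamma X k"
          using le_p unfolding gamma_le_def by simp
        ultimately obtain D' where D': "gamma_le X k (t, D) (a, D')"
          using gamma_le_exists_above[OF assms(1)] by (meson not_le less_imp_le)
        have "gamma_le X k (a, D') p"
          using gamma_le_factor[OF assms(1) D' le_p less_imp_le[OF assms(4)]] .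
        with \<open>\<nexists>D. gamma_le X k (a, D) p\<close> show False by blast
      qed
    qed
    with assms(2) show ?thesis
      unfolding branch_point_def by auto
  qed
qed

lemma branch_point_below_le_unbranched:
  assumes "finite X" "gamma_le X k (s0, D0) q"
    and unbranched: "\<And>t. s0 \<le> t \<Longrightarrow> t \<le> fst q \<Longrightarrow> unique_below X k q t"
    and "branch_point X k (t, D)" "gamma_le X k (t, D) q"
  shows "gamma_le X k (t, D) (s0, D0)"
proof (cases "t \<le> s0")
  case True
  have "s0 \<le> fst q"
    using assms(2) unfolding gamma_le_def by simp
  with True show ?thesis
    using gamma_le_iff_below_unique_level[OF assms(1,2) unbranched] assms(5) by simp
next
  case False
  have t_le: "t \<le> fst q"
    using assms(5) unfolding gamma_le_def by simp
  have "(s0, D0) \<in> Gamma X k"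
    using assms(2) unfolding gamma_le_def by simp
  then obtain D1 where D1: "gamma_le X k (s0, D0) (t, D1)"
    using gamma_le_exists_above[OF assms(1)] False by (meson not_le less_imp_le)
  have "gamma_le X k (t, D1) q"
    using gamma_le_factor[OF assms(1) D1 assms(2) t_le] .
  moreover have "unique_below X k q t"
    using unbranched False t_le by simp
  ultimately have "D1 = D"
    using unique_belowD assms(5) by blast
  with D1 False have "\<exists>s' C'. s' < t \<and> gamma_le X k (s', C') (t, D)"
    by (metis not_le)
  then obtain s1 where "s1 < t" and two_below: "\<And>s'. s1 \<le> s' \<Longrightarrow> s' < t \<Longrightarrow>
      \<exists>C0 C1. C0 \<noteq> C1 \<and> gamma_le X k (s', C0) (t, D) \<and> gamma_le X k (s', C1) (t, D)"
    using assms(4) unfolding branch_point_def by auto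
  define s' where "s' = max s1 s0"
  have "s1 \<le> s'" "s' < t" "s0 \<le> s'" "s' \<le> fst q"
    using \<open>s1 < t\<close> False t_le unfolding s'_def by auto
  then obtain C0 C1 where "C0 \<noteq> C1" "gamma_le X k (s', C0) (t, D)" "gamma_le X k (s', C1) (t, D)"
    using two_below by blast
  moreover have "unique_below X k q s'"
    using unbranched \<open>s0 \<le> s'\<close> \<open>s' \<le> fst q\<close> by simp
  ultimately show ?thesis
    using unique_belowD gamma_le_trans[OF _ assms(5)] by blast
qed

lemma least_unbranched_level:
  assumes "finite X" "q \<in> Gamma X k"
  obtains s0 where "0 \<le> s0" "s0 \<le> fst q"
    "\<And>t. s0 \<le> t \<Longrightarrow> t \<le> fst q \<Longrightarrow> unique_below X k q t"
    "\<And>a. a \<in> insert 0 (pair_dists X) \<Longrightarrow> 0 \<le> a \<Longrightarrow> a < s0 \<Longrightarrow>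
      \<exists>t. a \<le> t \<and> t \<le> fst q \<and> \<not> unique_below X k q t"
proof -
  define T where "T = {t \<in> insert (fst q) (insert 0 (pair_dists X)).
    0 \<le> t \<and> (\<forall>t'. t \<le> t' \<and> t' \<le> fst q \<longrightarrow> unique_below X k q t')}"
  have "0 \<le> fst q"
    using assms(2) unfolding Gamma_def by auto
  moreover have "\<forall>t. fst q \<le> t \<and> t \<le> fst q \<longrightarrow> unique_below X k q t"
  proof (intro allI impI)
    fix t assume "fst q \<le> t \<and> t \<le> fst q"
    then have "t = fst q"
      by linarith
    then show "unique_below X k q t"
      using unique_below_self[OF assms(2)] by simp
  qed
  ultimately have "fst q \<in> T"
    unfolding T_def by simp
  have "finite T"
    using finite_pair_dists[OF assms(1)] unfolding T_def by (auto intro: finite_subset)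
  define s0 where "s0 = Min T"
  have "s0 \<in> T" and s0_least: "\<And>t. t \<in> T \<Longrightarrow> s0 \<le> t"
    using Min_in[OF \<open>finite T\<close>] Min_le[OF \<open>finite T\<close>] \<open>fst q \<in> T\<close>
    unfolding s0_def by blast+
  show thesis
  proof (rule that)
    show "0 \<le> s0" "\<And>t. s0 \<le> t \<Longrightarrow> t \<le> fst q \<Longrightarrow> unique_below X k q t"
      using \<open>s0 \<in> T\<close> unfolding T_def by auto
    show "s0 \<le> fst q"
      using s0_least[OF \<open>fst q \<in> T\<close>] .
    show "\<exists>t. a \<le> t \<and> t \<le> fst q \<and> \<not> unique_below X k q t"
      if "a \<in> insert 0 (pair_dists X)" "0 \<le> a" "a < s0" for a
    proof (rule ccontr)
      assume "\<nexists>t. a \<le> t \<and> t \<le> fst q \<and> \<not> unique_below X k q t"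
      with that(1,2) have "a \<in> T"
        unfolding T_def by auto
      with s0_least \<open>a < s0\<close> show False
        by fastforce
    qed
  qed
qed

lemma unique_below_down_to_previous_level:
  assumes "finite X" "gamma_le X k (s0, D0) q" "unique_below X k q s0" "0 \<le> a"
    and const: "\<And>t. a \<le> t \<Longrightarrow> t < s0 \<Longrightarrow> pi0 X k t = pi0 X k a"
    and "unique_below X k (s0, D0) a" "a \<le> t" "t < s0"
  shows "unique_below X k q t"
proof -
  have "unique_below X k (s0, D0) t \<longleftrightarrow> unique_below X k (s0, D0) a"
    by (rule unique_below_cong_level[OF const[OF assms(7,8)]]) (use assms(4,7,8) in auto)
  moreover have "unique_below X k (s0, D0) t \<longleftrightarrow> unique_below X k q t"
    by (rule unique_below_iff_below_unique_level[OF assms(1-3)]) (use assms(8) in simp)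
  ultimately show ?thesis
    using assms(6) by blast
qed

lemma branch_point_at_least_unbranched_level:
  assumes "finite X" "gamma_le X k (s0, D0) q" "0 \<le> s0"
    and unbranched: "\<And>t. s0 \<le> t \<Longrightarrow> t \<le> fst q \<Longrightarrow> unique_below X k q t"
    and least: "\<And>a. a \<in> insert 0 (pair_dists X) \<Longrightarrow> 0 \<le> a \<Longrightarrow> a < s0 \<Longrightarrow>
      \<exists>t. a \<le> t \<and> t \<le> fst q \<and> \<not> unique_below X k q t"
  shows "branch_point X k (s0, D0)"
proof -
  have "(s0, D0) \<in> Gamma X k" "s0 \<le> fst q"
    using assms(2) unfolding gamma_le_def by simp_all
  show ?thesis
  proof (cases "s0 = 0")
    case True
    with \<open>(s0, D0) \<in> Gamma X k\<close> show ?thesis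
      using branch_point_level_zero by simp
  next
    case False
    with assms(3) have "0 < s0"
      by simp
    obtain a where a: "a \<in> insert 0 (pair_dists X)" "0 \<le> a" "a < s0"
      and const: "\<And>t. a \<le> t \<Longrightarrow> t < s0 \<Longrightarrow> pi0 X k t = pi0 X k a"
      using previous_critical_level[where k = k, OF assms(1) \<open>0 < s0\<close>] by blast
    have "\<not> unique_below X k (s0, D0) a"
    proof
      assume unique_a: "unique_below X k (s0, D0) a"
      obtain t where "a \<le> t" "t \<le> fst q" "\<not> unique_below X k q t"
        using least[OF a] by auto
      moreover have "unique_below X k q t" if "a \<le> t" "t \<le> fst q" for t
      proof (cases "t < s0")
        case True
        have "unique_below X k q s0"
          using unbranched \<open>s0 \<le> fst q\<close> by simp
        from unique_below_down_to_previous_level[OF assms(1,2) this \<open>0 \<le> a\<close> const unique_a that(1) True]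
        show ?thesis .
      next
        case False
        with that(2) show ?thesis
          using unbranched by simp
      qed
      ultimately show False
        by blast
    qed
    with a const show ?thesis
      using branch_point_if_not_unique_below[OF assms(1) \<open>(s0, D0) \<in> Gamma X k\<close>]
      unfolding fst_conv by blast
  qed
qed

theorem greatest_branch_point_below:
  assumes "finite X" "q \<in> Gamma X k"
  shows "\<exists>p0. branch_point X k p0 \<and> gamma_le X k p0 q \<and>
           (\<forall>p. branch_point X k p \<and> gamma_le X k p q \<longrightarrow> gamma_le X k p p0)"
proof -
  obtain s0 where "0 \<le> s0" "s0 \<le> fst q"
    and unbranched: "\<And>t. s0 \<le> t \<Longrightarrow> t \<le> fst q \<Longrightarrow> unique_below X k q t"
    and least: "\<And>a. a \<in> insert 0 (pair_dists X) \<Longrightarrow> 0 \<le> a \<Longrightarrow> a < s0 \<Longrightarrow>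
      \<exists>t. a \<le> t \<and> t \<le> fst q \<and> \<not> unique_below X k q t"
    using least_unbranched_level[OF assms] by blast
  have "unique_below X k q s0"
    using unbranched \<open>s0 \<le> fst q\<close> by simp
  then obtain D0 where D0: "gamma_le X k (s0, D0) q"
    unfolding unique_below_def by blast
  have "branch_point X k (s0, D0)"
    using branch_point_at_least_unbranched_level[OF assms(1) D0 \<open>0 \<le> s0\<close> unbranched least] .
  with D0 show ?thesis
    using branch_point_below_le_unbranched[OF assms(1) D0 unbranched] by auto
qed

theorem lemma11:
  fixes X :: "(real ^ 'n) set" and k :: nat and s :: real and C :: "(real ^ 'n) set"
  assumes "finite X" and "k + 1 \<le> card X" and "(s, C) \<in> Gamma X k"
  shows "\<exists>s0 C0. branch_point X k (s0, C0) \<and> gamma_le X k (s0, C0) (s, C) \<and>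
           (\<forall>t D. branch_point X k (t, D) \<and> gamma_le X k (t, D) (s, C)
                   \<longrightarrow> gamma_le X k (t, D) (s0, C0))"
  using greatest_branch_point_below[OF assms(1,3)] by auto

end
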